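(* Assume $\varphi'(1) > 0$. Let $q \in \mathbb{R}^m$ have positive integer entries, $n = q_1+\cdots+q_m$, and for $X = (x_1,\dots,x_m) \in (\mathbb{S}^1)^m$ let $\tilde X \in (\mathbb{S}^1)^n$ consist of $x_1$ repeated $q_1$ times, ..., $x_m$ repeated $q_m$ times. If $X$ is a critical point of $f_m(X) = \frac12\langle qq^\top, \varphi(X^\top X)\rangle$ at which the Riemannian Hessian has one zero eigenvalue and all other $m-1$ eigenvalues negative, then $\tilde X$ is a critical point of $f_n(\tilde X) = \frac12\langle \mathbf{1}_n\mathbf{1}_n^\top, \varphi(\tilde X^\top\tilde X)\rangle$ at which the Riemannian Hessian has one zero eigenvalue and all other $n-1$ eigenvalues negative.
   Context: $d=2$. $\varphi:[-1,1]\to\mathbb{R}$ is twice continuously differentiable and applied entrywise to matrices. $(\mathbb{S}^1)^k$ is the set of $2\times k$ real matrices with unit-norm columns, a Riemannian submanifold of $\mathbb{R}^{2\times k}$ with the Frobenius metric; $\langle A,B\rangle = \mathrm{Tr}(A^\top B)$; gradient and Hessian are Riemannian. *)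

theory Defs
  imports "HOL-Analysis.Derivative" "Jordan_Normal_Form.Char_Poly"
begin

text \<open>Points of S^1 are represented as pairs (a,b) in R^2 = real * real; a point of
(S^1)^k is a map X :: nat => real * real, of which only the columns X 0, ..., X (k-1)
are used.\<close>

definition ip2 :: "real \<times> real \<Rightarrow> real \<times> real \<Rightarrow> real" where
  "ip2 x y = fst x * fst y + snd x * snd y"

definition on_torus :: "nat \<Rightarrow> (nat \<Rightarrow> real \<times> real) \<Rightarrow> bool" where
  "on_torus k X \<longleftrightarrow> (\<forall>i<k. ip2 (X i) (X i) = 1)"

definition C2_on_interval :: "(real \<Rightarrow> real) \<Rightarrow> (real \<Rightarrow> real) \<Rightarrow> (real \<Rightarrow> real) \<Rightarrow> bool" where
  "C2_on_interval phi dphi ddphi \<longleftrightarrow>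
     (\<forall>x\<in>{-1..1}. (phi has_real_derivative dphi x) (at x within {-1..1})) \<and>
     (\<forall>x\<in>{-1..1}. (dphi has_real_derivative ddphi x) (at x within {-1..1})) \<and>
     continuous_on {-1..1} ddphi"

definition fobj :: "(real \<Rightarrow> real) \<Rightarrow> nat \<Rightarrow> (nat \<Rightarrow> nat \<Rightarrow> real) \<Rightarrow> (nat \<Rightarrow> real \<times> real) \<Rightarrow> real" where
  "fobj phi k W X = 1/2 * (\<Sum>i<k. \<Sum>j<k. W i j * phi (ip2 (X i) (X j)))"

text \<open>Rotation by angle t; for x in S^1 and tangent vector u = t x^perp this is
exactly the Riemannian exponential Exp_x(u) = cos t x + sin t x^perp.\<close>
definition rot :: "real \<Rightarrow> real \<times> real \<Rightarrow> real \<times> real" where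
  "rot t x = (cos t * fst x - sin t * snd x, sin t * fst x + cos t * snd x)"

text \<open>Normal coordinates of (S^1)^k at X with respect to the orthonormal tangent basis
E_i = x_i^perp e_i^T: t |-> Exp_X(sum_i t_i E_i).\<close>
definition expX :: "(nat \<Rightarrow> real \<times> real) \<Rightarrow> (nat \<Rightarrow> real) \<Rightarrow> (nat \<Rightarrow> real \<times> real)" where
  "expX X t = (\<lambda>i. rot (t i) (X i))"

text \<open>Riemannian gradient and Riemannian Hessian of f at X, expressed in the orthonormal
basis E_i: these are the gradient and Hessian of f o Exp_X in normal coordinates at 0.\<close>
definition rgrad :: "((nat \<Rightarrow> real \<times> real) \<Rightarrow> real) \<Rightarrow> (nat \<Rightarrow> real \<times> real) \<Rightarrow> nat \<Rightarrow> real" where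
  "rgrad f X i = deriv (\<lambda>s. f (expX X (\<lambda>l. if l = i then s else 0))) 0"

definition rhess :: "((nat \<Rightarrow> real \<times> real) \<Rightarrow> real) \<Rightarrow> (nat \<Rightarrow> real \<times> real) \<Rightarrow> nat \<Rightarrow> nat \<Rightarrow> real" where
  "rhess f X i j = deriv (\<lambda>s. deriv (\<lambda>r. f (expX X
       (\<lambda>l. (if l = i then s else 0) + (if l = j then r else 0)))) 0) 0"

definition riem_critical :: "nat \<Rightarrow> ((nat \<Rightarrow> real \<times> real) \<Rightarrow> real) \<Rightarrow> (nat \<Rightarrow> real \<times> real) \<Rightarrow> bool" where
  "riem_critical k f X \<longleftrightarrow> (\<forall>i<k. rgrad f X i = 0)"

definition rhess_mat :: "nat \<Rightarrow> ((nat \<Rightarrow> real \<times> real) \<Rightarrow> real) \<Rightarrow> (nat \<Rightarrow> real \<times> real) \<Rightarrow> real mat" where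
  "rhess_mat k f X = mat k k (\<lambda>(i, j). rhess f X i j)"

definition one_zero_rest_neg :: "nat \<Rightarrow> real mat \<Rightarrow> bool" where
  "one_zero_rest_neg k A \<longleftrightarrow>
     (\<exists>ls. length ls = k - 1 \<and> (\<forall>a\<in>set ls. a < 0) \<and>
        char_poly A = [:0, 1:] * prod_list (map (\<lambda>a. [:- a, 1:]) ls))"

end

theory Submission
  imports Defs "Jordan_Normal_Form.Schur_Decomposition"
begin

text \<open>In the normal coordinates \<open>t \<mapsto> Exp\<^sub>X(\<Sum>\<^sub>i t\<^sub>i E\<^sub>i)\<close> the objective is
  \<open>1/2 \<Sum>\<^sub>i\<^sub>j W\<^sub>i\<^sub>j \<phi>(\<langle>x\<^sub>i, rot(t\<^sub>j - t\<^sub>i) x\<^sub>j\<rangle>)\<close>, so the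
  Riemannian gradient is a weighted sum over neighbours and the Riemannian Hessian is a weighted
  graph Laplacian with edge weights \<open>W\<^sub>i\<^sub>j h(x\<^sub>i, x\<^sub>j)\<close>.  Replicating \<open>x\<^sub>a\<close> \<open>q\<^sub>a\<close> times
  turns the gradient at every copy of \<open>x\<^sub>a\<close> into the gradient at \<open>x\<^sub>a\<close> divided by \<open>q\<^sub>a\<close>.
  For the Hessian, splitting a tangent vector \<open>v\<close> of the large configuration into its block
  means and the deviations from them gives
  \<open>v\<^sup>T H\<^sub>n v = (mean v)\<^sup>T H\<^sub>m (mean v) + \<Sum>\<^sub>a \<mu>\<^sub>a \<Sum>\<^sub>r (v\<^sub>a\<^sub>r - mean\<^sub>a v)\<^sup>2\<close>
  with \<open>\<mu>\<^sub>a = \<Sum>\<^sub>b q\<^sub>b h(x\<^sub>a, x\<^sub>b)\<close>.  \<open>H\<^sub>m\<close> is negative semidefinite with a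
  one-dimensional null space, which therefore consists of the constant vectors; since
  \<open>h(x,x) = -\<phi>'(1) < 0\<close>, testing \<open>H\<^sub>m\<close> on a unit vector gives \<open>\<mu>\<^sub>a < 0\<close>.  Hence
  \<open>H\<^sub>n\<close> is negative semidefinite with the constants as null space, too.  The spectral
  theorem for real symmetric matrices translates between this description and the eigenvalue
  condition on the characteristic polynomial.\<close>

no_notation Inner_Product.inner (infix \<open>\<bullet>\<close> 70)
no_notation Finite_Cartesian_Product.vec_nth (infixl \<open>$\<close> 90)

section \<open>Spectral theorem for real symmetric matrices\<close>

lemma eigenvalue_real_symmetric_real:
  fixes A :: "real mat" and a :: complex
  assumes A: "A \<in> carrier_mat n n" and sym: "transpose_mat A = A"
    and ev: "eigenvalue (of_real_hom.mat_hom A) a"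
  shows "a \<in> \<real>"
proof -
  let ?Ac = "of_real_hom.mat_hom A :: complex mat"
  have Ac: "?Ac \<in> carrier_mat n n" using A by auto
  obtain w where w: "w \<in> carrier_vec n" "w \<noteq> 0\<^sub>v n" "?Ac *\<^sub>v w = a \<cdot>\<^sub>v w"
    using ev Ac unfolding eigenvalue_def eigenvector_def by auto
  have row: "a * w $ i = (\<Sum>j<n. of_real (A $$ (i,j)) * w $ j)" if "i < n" for i
  proof -
    have "a * w $ i = (?Ac *\<^sub>v w) $ i" using w that by simp
    also have "\<dots> = (\<Sum>j<n. of_real (A $$ (i,j)) * w $ j)"
      using that A w(1) by (auto simp: scalar_prod_def lessThan_atLeast0 intro!: sum.cong)
    finally show ?thesis .
  qed
  \<comment> \<open>Rayleigh quotient: \<open>a\<close> is the ratio of the real numbers \<open>w\<^sup>* A w\<close> and \<open>w\<^sup>* w\<close>.\<close>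
  define S where "S = (\<Sum>i<n. \<Sum>j<n. of_real (A $$ (i,j)) * w $ j * cnj (w $ i))"
  define N where "N = (\<Sum>i<n. w $ i * cnj (w $ i))"
  have aN: "a * N = S"
    unfolding N_def S_def sum_distrib_left
    by (intro sum.cong refl) (simp add: row mult.assoc[symmetric] sum_distrib_right)
  have A_sym: "A $$ (j,i) = A $$ (i,j)" if "i < n" "j < n" for i j
    using arg_cong[OF sym, of "\<lambda>B. B $$ (i,j)"] A that by auto
  have "cnj S = (\<Sum>i<n. \<Sum>j<n. of_real (A $$ (i,j)) * cnj (w $ j) * w $ i)"
    unfolding S_def by simp
  also have "\<dots> = (\<Sum>j<n. \<Sum>i<n. of_real (A $$ (i,j)) * cnj (w $ j) * w $ i)"
    by (rule sum.swap)
  also have "\<dots> = S" unfolding S_def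
    by (intro sum.cong refl) (auto simp: A_sym mult_ac)
  finally have S_real: "cnj S = S" .
  have N_real: "N = of_real (\<Sum>i<n. (cmod (w $ i))\<^sup>2)"
    unfolding N_def by (simp add: of_real_sum complex_norm_square[symmetric])
  obtain i where i: "i < n" "w $ i \<noteq> 0"
    using w(1,2) by (metis eq_vecI carrier_vecD index_zero_vec)
  have "(\<Sum>i<n. (cmod (w $ i))\<^sup>2) > 0"
    by (rule sum_pos2[of _ i]) (use i in auto)
  then have "N \<noteq> 0" unfolding N_real by (metis of_real_eq_0_iff order_less_irrefl)
  moreover have "cnj a * N = a * N" using aN S_real N_real by (metis complex_cnj_mult complex_cnj_complex_of_real)
  ultimately show ?thesis by (metis Reals_cnj_iff mult_cancel_right)
qed

lemma char_poly_real_symmetric_splits: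
  fixes A :: "real mat"
  assumes A: "A \<in> carrier_mat n n" and sym: "transpose_mat A = A"
  shows "\<exists>es. char_poly A = (\<Prod>e\<leftarrow>es. [:-e,1:])"
proof -
  interpret complex_poly: map_poly_comm_ring_hom "of_real :: real \<Rightarrow> complex" ..
  let ?Ac = "of_real_hom.mat_hom A :: complex mat"
  have Ac: "?Ac \<in> carrier_mat n n" using A by auto
  obtain as where as: "char_poly ?Ac = (\<Prod>a\<leftarrow>as. [:- a, 1:])"
    using char_poly_factorized[OF Ac] by auto
  have real: "of_real (Re a) = a" if "a \<in> set as" for a
  proof -
    have "poly (char_poly ?Ac) a = 0" unfolding as using that
      by (auto simp: poly_prod_list prod_list_zero_iff)
    then have "a \<in> \<real>"
      by (intro eigenvalue_real_symmetric_real[OF A sym]) (simp add: eigenvalue_root_char_poly[OF Ac])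
    then show ?thesis by (simp add: complex_is_Real_iff complex_eq_iff)
  qed
  have "map_poly of_real (char_poly A) = map_poly (of_real :: real \<Rightarrow> complex) (\<Prod>e\<leftarrow>map Re as. [:-e,1:])"
    unfolding of_real_hom.char_poly_hom[OF A, symmetric] as complex_poly.hom_prod_list
    using real by (induct as) auto
  then have "char_poly A = (\<Prod>e\<leftarrow>map Re as. [:-e,1:])"
    by (intro poly_eqI) (metis of_real_hom.coeff_map_poly_hom of_real_eq_iff)
  then show ?thesis by blast
qed

definition orthonormal_mat :: "nat \<Rightarrow> real mat \<Rightarrow> bool" where
  "orthonormal_mat n P \<longleftrightarrow>
     P \<in> carrier_mat n n \<and> transpose_mat P * P = 1\<^sub>m n \<and> P * transpose_mat P = 1\<^sub>m n"

definition diag_of_list :: "real list \<Rightarrow> real mat" where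
  "diag_of_list es = mat (length es) (length es) (\<lambda>(i,j). if i = j then es ! i else 0)"

lemma orthonormal_mat_mult:
  assumes U: "orthonormal_mat n U" and V: "orthonormal_mat n V"
  shows "orthonormal_mat n (U * V)"
proof -
  from U V have U: "U \<in> carrier_mat n n" "transpose_mat U * U = 1\<^sub>m n" "U * transpose_mat U = 1\<^sub>m n"
    and V: "V \<in> carrier_mat n n" "transpose_mat V * V = 1\<^sub>m n" "V * transpose_mat V = 1\<^sub>m n"
    unfolding orthonormal_mat_def by auto
  have t: "transpose_mat (U * V) = transpose_mat V * transpose_mat U"
    using U V by (simp add: transpose_mult[of _ n n])
  have "transpose_mat U * (U * V) = transpose_mat U * U * V"
    by (rule assoc_mult_mat[symmetric]) (use U V in auto)
  then have "transpose_mat (U * V) * (U * V) = transpose_mat V * V"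
    unfolding t using U V by (simp add: assoc_mult_mat[of _ n n _ n _ n])
  moreover have "V * transpose_mat V * transpose_mat U = V * (transpose_mat V * transpose_mat U)"
    by (rule assoc_mult_mat) (use U V in auto)
  then have "U * V * transpose_mat (U * V) = U * transpose_mat U"
    unfolding t using U V by (simp add: assoc_mult_mat[of _ n n _ n _ n])
  ultimately show ?thesis using U V unfolding orthonormal_mat_def by auto
qed

lemma orthonormal_mat_of_cols:
  assumes us: "set us \<subseteq> carrier_vec n" "length us = n"
    and on: "\<forall>i<n. \<forall>j<n. us ! i \<bullet> us ! j = (if i = j then 1 else 0)"
  shows "orthonormal_mat n (mat_of_cols n us)"
proof -
  let ?U = "mat_of_cols n us"
  have U: "?U \<in> carrier_mat n n" using us by auto
  have "transpose_mat ?U * ?U = 1\<^sub>m n"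
  proof (rule eq_matI)
    fix i j assume "i < dim_row (1\<^sub>m n :: real mat)" "j < dim_col (1\<^sub>m n :: real mat)"
    then have ij: "i < n" "j < n" by auto
    have "(transpose_mat ?U * ?U) $$ (i,j) = col ?U i \<bullet> col ?U j"
      using ij U by (subst index_mult_mat(1)) (auto simp: carrier_matD)
    also have "\<dots> = us ! i \<bullet> us ! j"
      using ij us col_mat_of_cols[of _ us n] by (simp add: subset_code(1))
    finally show "(transpose_mat ?U * ?U) $$ (i,j) = 1\<^sub>m n $$ (i,j)" using on ij by auto
  qed (use U in auto)
  moreover then have "?U * transpose_mat ?U = 1\<^sub>m n"
    using mat_mult_left_right_inverse[of "transpose_mat ?U" n ?U] U by auto
  ultimately show ?thesis unfolding orthonormal_mat_def using U by auto
qed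

lemma orthonormal_basis_extension:
  fixes v :: "real vec"
  assumes v: "v \<in> carrier_vec n" and vv: "v \<bullet> v = 1"
  shows "\<exists>us. set us \<subseteq> carrier_vec n \<and> length us = n \<and> hd us = v \<and>
     (\<forall>i<n. \<forall>j<n. us ! i \<bullet> us ! j = (if i = j then 1 else 0))"
proof -
  have v0: "v \<noteq> 0\<^sub>v n" using vv v by auto
  interpret cof_vec_space n "TYPE(real)" .
  define b where "b = basis_completion v"
  from basis_completion[OF v v0, folded b_def]
  have dist_b: "distinct b" and indep: "\<not> lin_dep (set b)" and b: "set b \<subseteq> carrier_vec n"
    and hdb: "hd b = v" and len_b: "length b = n" by auto
  have n: "n \<noteq> 0" using v0 v by (cases n) auto
  from hdb len_b n obtain vs where bv: "b = v # vs" by (cases b) auto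
  define ws where "ws = gram_schmidt n b"
  from gram_schmidt_result[OF b dist_b indep refl, folded ws_def]
  have ws: "set ws \<subseteq> carrier_vec n" "corthogonal ws" "length ws = n" by (auto simp: len_b)
  from gram_schmidt_hd[OF v, of vs, folded bv] have hdws: "hd ws = v" unfolding ws_def .
  define us where "us = map (\<lambda>w. (1 / sqrt (w \<bullet> w)) \<cdot>\<^sub>v w) ws"
  have wsi: "ws ! i \<in> carrier_vec n" if "i < n" for i using ws that by auto
  have wpos: "ws ! i \<bullet> ws ! i > 0" if "i < n" for i
  proof -
    have "ws ! i \<bullet>c ws ! i \<noteq> 0" using corthogonalD[OF ws(2), of i i] ws(3) that by auto
    then have "ws ! i \<noteq> 0\<^sub>v n" using wsi[OF that] by auto
    then show ?thesis using conjugate_square_greater_0_vec[OF wsi[OF that]] by simp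
  qed
  have worth: "ws ! i \<bullet> ws ! j = 0" if "i < n" "j < n" "i \<noteq> j" for i j
    using corthogonalD[OF ws(2), of i j] ws(3) that by simp
  have "us ! i \<bullet> us ! j = (if i = j then 1 else 0)" if "i < n" "j < n" for i j
  proof -
    have "us ! i \<bullet> us ! j = (1 / sqrt (ws!i \<bullet> ws!i)) * (1 / sqrt (ws!j \<bullet> ws!j)) * (ws!i \<bullet> ws!j)"
      unfolding us_def using that ws wsi[OF that(1)] wsi[OF that(2)] by simp
    also have "\<dots> = (if i = j then 1 else 0)"
      using worth[OF that] wpos[OF that(1)] by (auto simp: field_simps real_sqrt_mult[symmetric])
    finally show ?thesis .
  qed
  moreover have "set us \<subseteq> carrier_vec n" "length us = n" unfolding us_def using ws by auto
  moreover have "hd us = v" unfolding us_def using ws n hdws vv by (cases ws) auto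
  ultimately show ?thesis by blast
qed

lemma unit_eigenvector_exists:
  fixes A :: "real mat"
  assumes A: "A \<in> carrier_mat n n" and ev: "eigenvalue A e"
  shows "\<exists>v. v \<in> carrier_vec n \<and> v \<bullet> v = 1 \<and> A *\<^sub>v v = e \<cdot>\<^sub>v v"
proof -
  obtain w where w: "w \<in> carrier_vec n" "w \<noteq> 0\<^sub>v n" "A *\<^sub>v w = e \<cdot>\<^sub>v w"
    using ev A unfolding eigenvalue_def eigenvector_def by auto
  have ww: "w \<bullet> w > 0" using conjugate_square_greater_0_vec[OF w(1)] w(2) by simp
  define v where "v = (1 / sqrt (w \<bullet> w)) \<cdot>\<^sub>v w"
  have "v \<in> carrier_vec n" "v \<bullet> v = 1" unfolding v_def using w ww by (auto simp: field_simps)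
  moreover have "A *\<^sub>v v = e \<cdot>\<^sub>v v" unfolding v_def
    using mult_mat_vec[OF A w(1)] w(3) by (auto simp: smult_smult_assoc mult.commute)
  ultimately show ?thesis by blast
qed

abbreviation block_diag1 :: "'a::zero mat \<Rightarrow> 'a mat \<Rightarrow> 'a mat" where
  "block_diag1 A B \<equiv> four_block_mat A (0\<^sub>m 1 (dim_col B)) (0\<^sub>m (dim_row B) 1) B"

lemma diag_of_list_Cons: "block_diag1 (mat 1 1 (\<lambda>_. e)) (diag_of_list es) = diag_of_list (e # es)"
  unfolding diag_of_list_def by (rule eq_matI) (auto simp: nth_Cons')

lemma orthonormal_mat_block_diag1:
  assumes P: "orthonormal_mat n P"
  shows "orthonormal_mat (Suc n) (block_diag1 (1\<^sub>m 1) P)"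
proof -
  from P have P: "P \<in> carrier_mat n n" "transpose_mat P * P = 1\<^sub>m n" "P * transpose_mat P = 1\<^sub>m n"
    unfolding orthonormal_mat_def by auto
  let ?B = "block_diag1 (1\<^sub>m 1) P"
  note mult_block = mult_four_block_mat[where ?nr1.0=1 and ?n1.0=1 and ?nc1.0=1 and ?nr2.0=n and ?n2.0=n and ?nc2.0=n]
  have Bt: "transpose_mat ?B = block_diag1 (1\<^sub>m 1) (transpose_mat P)"
    using P by (subst transpose_four_block_mat) auto
  have Pt: "transpose_mat P \<in> carrier_mat n n" using P by auto
  have "transpose_mat ?B * ?B = 1\<^sub>m (Suc n)" "?B * transpose_mat ?B = 1\<^sub>m (Suc n)"
    unfolding Bt using P Pt by (subst mult_block, auto)+
  then show ?thesis using P unfolding orthonormal_mat_def by auto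
qed

lemma block_diag1_conjugate:
  fixes A :: "real mat"
  assumes P: "P \<in> carrier_mat n n" and A: "A \<in> carrier_mat n n"
  shows "transpose_mat (block_diag1 (1\<^sub>m 1) P) * block_diag1 (mat 1 1 (\<lambda>_. e)) A * block_diag1 (1\<^sub>m 1) P
       = block_diag1 (mat 1 1 (\<lambda>_. e)) (transpose_mat P * A * P)"
proof -
  have Pt: "transpose_mat P \<in> carrier_mat n n" using P by auto
  note mult_block = mult_four_block_mat[where ?nr1.0=1 and ?n1.0=1 and ?nc1.0=1 and ?nr2.0=n and ?n2.0=n and ?nc2.0=n]
  have "transpose_mat (block_diag1 (1\<^sub>m 1) P) = block_diag1 (1\<^sub>m 1) (transpose_mat P)"
    using P by (subst transpose_four_block_mat) auto
  moreover have "block_diag1 (1\<^sub>m 1) (transpose_mat P) * block_diag1 (mat 1 1 (\<lambda>_. e)) A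
      = block_diag1 (mat 1 1 (\<lambda>_. e)) (transpose_mat P * A)"
    using P A Pt by (subst mult_block) auto
  moreover have "block_diag1 (mat 1 1 (\<lambda>_. e)) (transpose_mat P * A) * block_diag1 (1\<^sub>m 1) P
      = block_diag1 (mat 1 1 (\<lambda>_. e)) (transpose_mat P * A * P)"
    using P A Pt by (subst mult_block) auto
  ultimately show ?thesis by simp
qed

lemma symmetric_deflation:
  fixes A :: "real mat"
  assumes A: "A \<in> carrier_mat (Suc n) (Suc n)" and sym: "transpose_mat A = A"
    and v: "v \<in> carrier_vec (Suc n)" "v \<bullet> v = 1" and eig: "A *\<^sub>v v = e \<cdot>\<^sub>v v"
  shows "\<exists>U A'. orthonormal_mat (Suc n) U \<and> A' \<in> carrier_mat n n \<and> transpose_mat A' = A' \<and>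
           transpose_mat U * A * U = block_diag1 (mat 1 1 (\<lambda>_. e)) A'"
proof -
  obtain us where us: "set us \<subseteq> carrier_vec (Suc n)" "length us = Suc n" "hd us = v"
    and on: "\<forall>i<Suc n. \<forall>j<Suc n. us ! i \<bullet> us ! j = (if i = j then 1 else 0)"
    using orthonormal_basis_extension[OF v] by blast
  define U where "U = mat_of_cols (Suc n) us"
  have oU: "orthonormal_mat (Suc n) U" unfolding U_def by (rule orthonormal_mat_of_cols[OF us(1,2) on])
  then have U: "U \<in> carrier_mat (Suc n) (Suc n)" unfolding orthonormal_mat_def by auto
  have "map vec_inv us = us"
    using on us(1,2) by (intro nth_equalityI) (auto simp: vec_inv_def)
  then have Uinv: "corthogonal_inv U = transpose_mat U"
    unfolding corthogonal_inv_def U_def using us by (simp add: transpose_mat_of_cols)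
  define B where "B = transpose_mat U * A * U"
  have B: "B \<in> carrier_mat (Suc n) (Suc n)" unfolding B_def using U A by auto
  \<comment> \<open>\<open>U\<close> has first column \<open>v\<close>, so the first column of \<open>B\<close> is \<open>e\<close> times a unit vector;
    symmetry of \<open>B\<close> then clears its first row as well\<close>
  have v0: "v \<noteq> 0\<^sub>v (Suc n)" using v by auto
  have corth: "corthogonal us" using on us(2) by (intro corthogonalI) simp
  have col0: "col B 0 = vec (Suc n) (\<lambda>i. if i = 0 then e else 0)"
    using corthogonal_col_ev_0[OF A v(1) v0 eig _ us(3,1) corth us(2)]
    unfolding B_def Uinv[unfolded U_def] U_def by simp
  have "transpose_mat B = transpose_mat (transpose_mat U * (A * U))"
    unfolding B_def using U A by simp
  also have "\<dots> = transpose_mat (A * U) * U"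
    using U A by (subst transpose_mult[of _ "Suc n" "Suc n"]) auto
  also have "\<dots> = B"
    unfolding B_def using U A sym by (subst transpose_mult[of _ "Suc n" "Suc n"]) auto
  finally have symB: "transpose_mat B = B" .
  have Bsym: "B $$ (i, j) = B $$ (j, i)" if "i < Suc n" "j < Suc n" for i j
    using arg_cong[OF symB, of "\<lambda>M. M $$ (j, i)"] B that by auto
  have B0: "B $$ (i, 0) = (if i = 0 then e else 0)" if "i < Suc n" for i
    using arg_cong[OF col0, of "\<lambda>w. w $ i"] B that by auto
  define A' where "A' = mat n n (\<lambda>(i,j). B $$ (Suc i, Suc j))"
  have "B = block_diag1 (mat 1 1 (\<lambda>_. e)) A'"
    by (rule eq_matI) (use B B0 Bsym in \<open>auto simp: A'_def\<close>)
  moreover have "transpose_mat A' = A'"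
    unfolding A'_def by (rule eq_matI) (auto simp: Bsym)
  ultimately show ?thesis using oU unfolding B_def by (intro exI[of _ U] exI[of _ A']) (auto simp: A'_def)
qed

lemma char_poly_orthonormal_block_diag1:
  fixes A :: "real mat"
  assumes A: "A \<in> carrier_mat n n" and U: "orthonormal_mat n U" and A': "A' \<in> carrier_mat n' n'"
    and UAU: "transpose_mat U * A * U = block_diag1 (mat 1 1 (\<lambda>_. e)) A'"
  shows "char_poly A = [: -e, 1 :] * char_poly A'"
proof -
  have Uc: "U \<in> carrier_mat n n" and UU: "transpose_mat U * U = 1\<^sub>m n" "U * transpose_mat U = 1\<^sub>m n"
    using U unfolding orthonormal_mat_def by auto
  have "similar_mat (transpose_mat U * A * U) A"
    unfolding similar_mat_def
    by (intro exI[of _ "transpose_mat U"] exI[of _ U] similar_mat_witI[of _ _ n]) (use Uc A UU in auto)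
  then have "char_poly A = char_poly (block_diag1 (mat 1 1 (\<lambda>_. e)) A')"
    unfolding UAU by (simp add: char_poly_similar)
  also have "\<dots> = char_poly (mat 1 1 (\<lambda>_. e)) * char_poly A'"
    by (rule char_poly_four_block_zeros_col) (use A' in auto)
  also have "char_poly (mat 1 1 (\<lambda>_. e)) = [: -e, 1 :]"
    by (simp add: char_poly_defs det_def sign_def)
  finally show ?thesis .
qed

theorem real_symmetric_diagonalization:
  fixes A :: "real mat"
  assumes "A \<in> carrier_mat n n" "transpose_mat A = A" "char_poly A = (\<Prod>e\<leftarrow>es. [:-e,1:])"
  shows "\<exists>P. orthonormal_mat n P \<and> transpose_mat P * A * P = diag_of_list es"
  using assms
proof (induct es arbitrary: n A)
  case Nil
  then have n: "n = 0" using degree_monic_char_poly[of A n] by auto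
  have "transpose_mat (1\<^sub>m 0) * A * 1\<^sub>m 0 = diag_of_list []"
    using Nil(1) n unfolding diag_of_list_def by (intro eq_matI) auto
  moreover have "orthonormal_mat 0 (1\<^sub>m 0)" unfolding orthonormal_mat_def by auto
  ultimately show ?case using n by blast
next
  case (Cons e es n A)
  note A = Cons(2) and symA = Cons(3)
  have cp: "char_poly A = [: -e, 1 :] * (\<Prod>e\<leftarrow>es. [:- e, 1:])" using Cons(4) by simp
  have "degree (char_poly A) = Suc (length es)"
    unfolding Cons(4) degree_linear_factors by simp
  then obtain n' where n: "n = Suc n'" using degree_monic_char_poly[OF A] by (cases n) auto
  have "eigenvalue A e" unfolding eigenvalue_root_char_poly[OF A] cp by simp
  then obtain v where v: "v \<in> carrier_vec n" "v \<bullet> v = 1" "A *\<^sub>v v = e \<cdot>\<^sub>v v"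
    using unit_eigenvector_exists[OF A] by blast
  obtain U A' where U: "orthonormal_mat n U" and A': "A' \<in> carrier_mat n' n'" "transpose_mat A' = A'"
    and UAU: "transpose_mat U * A * U = block_diag1 (mat 1 1 (\<lambda>_. e)) A'"
    using symmetric_deflation[OF A[unfolded n] symA v[unfolded n]] n by blast
  have Uc: "U \<in> carrier_mat n n" using U unfolding orthonormal_mat_def by auto
  have "char_poly A = [: -e, 1 :] * char_poly A'"
    by (rule char_poly_orthonormal_block_diag1[OF A U A'(1) UAU])
  then have "char_poly A' = (\<Prod>e\<leftarrow>es. [:- e, 1:])"
    using cp by (metis mult_cancel_left pCons_eq_0_iff zero_neq_one)
  then obtain P' where P': "orthonormal_mat n' P'" and D': "transpose_mat P' * A' * P' = diag_of_list es"
    using Cons(1)[OF A'] by blast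
  have P'c: "P' \<in> carrier_mat n' n'" using P' unfolding orthonormal_mat_def by auto
  define B where "B = block_diag1 (1\<^sub>m 1) P'"
  have B: "orthonormal_mat n B" unfolding B_def n by (rule orthonormal_mat_block_diag1[OF P'])
  then have Bc: "B \<in> carrier_mat n n" unfolding orthonormal_mat_def by auto
  have "transpose_mat (U * B) * A * (U * B) = transpose_mat B * (transpose_mat U * A * U) * B"
    using Uc Bc A by (simp add: transpose_mult[of _ n n] assoc_mult_mat[of _ n n _ n _ n])
  also have "\<dots> = diag_of_list (e # es)"
    unfolding UAU B_def block_diag1_conjugate[OF P'c A'(1)] D' by (rule diag_of_list_Cons)
  finally show ?case using orthonormal_mat_mult[OF U B] by blast
qed

section \<open>Negative semidefinite forms with a one-dimensional null space\<close>

definition quad_form :: "nat \<Rightarrow> real mat \<Rightarrow> (nat \<Rightarrow> real) \<Rightarrow> real" where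
  "quad_form n M x = (\<Sum>i<n. \<Sum>j<n. x i * M $$ (i,j) * x j)"

text \<open>For a negative semidefinite form the isotropic vectors are exactly the null vectors, so
  the second conjunct says that the null space is the line spanned by \<open>z\<close>.\<close>

definition neg_semidef_corank_one :: "nat \<Rightarrow> real mat \<Rightarrow> bool" where
  "neg_semidef_corank_one n M \<longleftrightarrow> (\<forall>x. quad_form n M x \<le> 0) \<and>
     (\<exists>z. (\<exists>i<n. z i \<noteq> 0) \<and> (\<forall>x. quad_form n M x = 0 \<longleftrightarrow> (\<exists>c. \<forall>i<n. x i = c * z i)))"

lemma quad_form_cong:
  assumes "\<And>i. i < n \<Longrightarrow> x i = y i"
  shows "quad_form n M x = quad_form n M y"
  unfolding quad_form_def using assms by simp

lemma sum_nonpos_eq_0_iff: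
  fixes f :: "'a \<Rightarrow> 'b::ordered_ab_group_add"
  assumes "finite A" "\<And>x. x \<in> A \<Longrightarrow> f x \<le> 0"
  shows "sum f A = 0 \<longleftrightarrow> (\<forall>x\<in>A. f x = 0)"
  using sum_nonneg_eq_0_iff[of A "\<lambda>x. - f x"] assms by (simp add: sum_negf)

lemma orthonormal_mat_col_inner:
  assumes "orthonormal_mat n P" "k < n" "l < n"
  shows "(\<Sum>i<n. P $$ (i,k) * P $$ (i,l)) = (if k = l then 1 else 0)"
proof -
  from assms have "P \<in> carrier_mat n n" "transpose_mat P * P = 1\<^sub>m n"
    unfolding orthonormal_mat_def by auto
  moreover have "(transpose_mat P * P) $$ (k,l) = (\<Sum>i<n. P $$ (i,k) * P $$ (i,l))"
    using assms calculation(1) by (simp add: scalar_prod_def lessThan_atLeast0)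
  ultimately show ?thesis using assms by simp
qed

lemma orthonormal_mat_row_inner:
  assumes "orthonormal_mat n P" "i < n" "j < n"
  shows "(\<Sum>k<n. P $$ (i,k) * P $$ (j,k)) = (if i = j then 1 else 0)"
proof -
  from assms have "P \<in> carrier_mat n n" "P * transpose_mat P = 1\<^sub>m n"
    unfolding orthonormal_mat_def by auto
  moreover have "(P * transpose_mat P) $$ (i,j) = (\<Sum>k<n. P $$ (i,k) * P $$ (j,k))"
    using assms calculation(1) by (simp add: scalar_prod_def lessThan_atLeast0)
  ultimately show ?thesis using assms by simp
qed

lemma orthonormal_mat_expansion:
  assumes P: "orthonormal_mat n P" and i: "i < n"
  shows "(\<Sum>k<n. P $$ (i,k) * (\<Sum>j<n. P $$ (j,k) * x j)) = x i"
proof -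
  have "(\<Sum>k<n. P $$ (i,k) * (\<Sum>j<n. P $$ (j,k) * x j)) = (\<Sum>k<n. \<Sum>j<n. P $$ (i,k) * P $$ (j,k) * x j)"
    by (simp add: sum_distrib_left mult.assoc)
  also have "\<dots> = (\<Sum>j<n. (\<Sum>k<n. P $$ (i,k) * P $$ (j,k)) * x j)"
    by (subst sum.swap) (simp add: sum_distrib_right)
  also have "\<dots> = (\<Sum>j<n. if i = j then x j else 0)"
    using orthonormal_mat_row_inner[OF P i] by (intro sum.cong) auto
  also have "\<dots> = x i" using i by simp
  finally show ?thesis .
qed

lemma quad_form_diagonalized:
  assumes M: "M \<in> carrier_mat n n" and P: "orthonormal_mat n P"
    and D: "transpose_mat P * M * P = diag_of_list es" and len: "length es = n"
  shows "quad_form n M x = (\<Sum>k<n. es ! k * (\<Sum>i<n. P $$ (i,k) * x i)\<^sup>2)"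
proof -
  from P have Pc: "P \<in> carrier_mat n n" and PPt: "P * transpose_mat P = 1\<^sub>m n"
    unfolding orthonormal_mat_def by auto
  have "P * diag_of_list es * transpose_mat P = P * transpose_mat P * M * (P * transpose_mat P)"
    unfolding D[symmetric] using Pc M by (simp add: assoc_mult_mat[of _ n n _ n _ n])
  then have M_eq: "M = P * diag_of_list es * transpose_mat P" using PPt M by simp
  have entry: "M $$ (i,j) = (\<Sum>k<n. P $$ (i,k) * es ! k * P $$ (j,k))" if "i < n" "j < n" for i j
    unfolding M_eq using that Pc len
    by (simp add: diag_of_list_def scalar_prod_def lessThan_atLeast0 sum_distrib_right
        if_distrib[of "\<lambda>t. _ * t"] cong: if_cong)
  have "quad_form n M x = (\<Sum>i<n. \<Sum>j<n. \<Sum>k<n. x i * (P $$ (i,k) * es ! k * P $$ (j,k)) * x j)"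
    unfolding quad_form_def by (simp add: entry sum_distrib_left sum_distrib_right)
  also have "\<dots> = (\<Sum>k<n. \<Sum>i<n. \<Sum>j<n. es ! k * ((P $$ (i,k) * x i) * (P $$ (j,k) * x j)))"
    by (subst sum.swap, subst (2) sum.swap) (simp add: mult_ac)
  also have "\<dots> = (\<Sum>k<n. es ! k * ((\<Sum>i<n. P $$ (i,k) * x i) * (\<Sum>j<n. P $$ (j,k) * x j)))"
    by (simp only: sum_product) (simp only: sum_distrib_left)
  also have "\<dots> = (\<Sum>k<n. es ! k * (\<Sum>i<n. P $$ (i,k) * x i)\<^sup>2)"
    by (simp add: power2_eq_square)
  finally show ?thesis .
qed

lemma quad_form_diagonalized_col:
  assumes M: "M \<in> carrier_mat n n" and P: "orthonormal_mat n P"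
    and D: "transpose_mat P * M * P = diag_of_list es" and len: "length es = n" and l: "l < n"
  shows "quad_form n M (\<lambda>i. P $$ (i,l)) = es ! l"
proof -
  have "quad_form n M (\<lambda>i. P $$ (i,l)) = (\<Sum>k<n. if k = l then es ! l else 0)"
    unfolding quad_form_diagonalized[OF M P D len]
    by (intro sum.cong refl) (simp add: orthonormal_mat_col_inner[OF P _ l] mult.commute)
  then show ?thesis using l by simp
qed

lemma orthonormal_mat_cols_not_parallel:
  assumes P: "orthonormal_mat n P" and kl: "k < n" "l < n" "k \<noteq> l"
    and a: "\<forall>i<n. P $$ (i,k) = a * z i" and b: "\<forall>i<n. P $$ (i,l) = b * z i"
  shows False
proof -
  define S where "S = (\<Sum>i<n. z i * z i)"
  have "a * a * S = 1" "a * b * S = 0" "b * b * S = 1"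
    using orthonormal_mat_col_inner[OF P kl(1,1)] orthonormal_mat_col_inner[OF P kl(1,2)]
      orthonormal_mat_col_inner[OF P kl(2,2)] a b kl(3)
    by (simp_all add: S_def sum_distrib_left mult_ac)
  then show False by (metis mult_eq_0_iff mult.commute mult.assoc zero_neq_one)
qed

lemma neg_semidef_corank_one_if_diag:
  assumes M: "M \<in> carrier_mat n n" and P: "orthonormal_mat n P"
    and D: "transpose_mat P * M * P = diag_of_list es" and len: "length es = n"
    and k0: "k0 < n" "es ! k0 = 0" and neg: "\<And>k. k < n \<Longrightarrow> k \<noteq> k0 \<Longrightarrow> es ! k < 0"
  shows "neg_semidef_corank_one n M"
proof -
  note Q = quad_form_diagonalized[OF M P D len]
  have es_nonpos: "es ! k \<le> 0" if "k < n" for k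
    using neg[OF that] k0 by (cases "k = k0") auto
  define z where "z i = P $$ (i,k0)" for i
  have "(\<Sum>i<n. z i * z i) = 1" using orthonormal_mat_col_inner[OF P k0(1) k0(1)] by (simp add: z_def)
  then have "\<exists>i<n. z i \<noteq> 0" by (rule contrapos_pp) simp
  moreover have "quad_form n M x = 0 \<longleftrightarrow> (\<exists>c. \<forall>i<n. x i = c * z i)" for x
  proof
    assume "quad_form n M x = 0"
    then have terms: "\<forall>k\<in>{..<n}. es ! k * (\<Sum>i<n. P $$ (i,k) * x i)\<^sup>2 = 0"
      unfolding Q by (subst (asm) sum_nonpos_eq_0_iff) (auto simp: es_nonpos mult_nonpos_nonneg)
    have coord: "(\<Sum>i<n. P $$ (i,k) * x i) = 0" if "k < n" "k \<noteq> k0" for k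
    proof -
      have "es ! k * (\<Sum>i<n. P $$ (i,k) * x i)\<^sup>2 = 0" using terms that by blast
      then show ?thesis using neg[OF that] by simp
    qed
    have "x i = (\<Sum>j<n. P $$ (j,k0) * x j) * z i" if "i < n" for i
    proof -
      have "x i = (\<Sum>k<n. P $$ (i,k) * (\<Sum>j<n. P $$ (j,k) * x j))"
        using orthonormal_mat_expansion[OF P that] by simp
      also have "\<dots> = (\<Sum>k<n. if k = k0 then P $$ (i,k0) * (\<Sum>j<n. P $$ (j,k0) * x j) else 0)"
        using coord by (intro sum.cong) auto
      finally show ?thesis using k0 by (simp add: z_def mult.commute)
    qed
    then show "\<exists>c. \<forall>i<n. x i = c * z i" by blast
  next
    assume "\<exists>c. \<forall>i<n. x i = c * z i"
    then obtain c where c: "\<forall>i<n. x i = c * z i" by blast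
    have "(\<Sum>i<n. P $$ (i,k) * x i) = c * (\<Sum>i<n. P $$ (i,k) * P $$ (i,k0))" for k
      unfolding sum_distrib_left using c by (intro sum.cong) (auto simp: z_def)
    then have "es ! k * (\<Sum>i<n. P $$ (i,k) * x i)\<^sup>2 = 0" if "k < n" for k
      using orthonormal_mat_col_inner[OF P that k0(1)] k0(2) by auto
    then show "quad_form n M x = 0" unfolding Q by (intro sum.neutral) blast
  qed
  ultimately show ?thesis unfolding neg_semidef_corank_one_def Q
    by (intro conjI allI sum_nonpos exI[of _ z]) (simp_all add: es_nonpos mult_nonpos_nonneg)
qed

lemma diag_if_neg_semidef_corank_one:
  assumes M: "M \<in> carrier_mat n n" and P: "orthonormal_mat n P"
    and D: "transpose_mat P * M * P = diag_of_list es" and len: "length es = n"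
    and nsd: "neg_semidef_corank_one n M"
  shows "\<exists>k0<n. es ! k0 = 0 \<and> (\<forall>k<n. k \<noteq> k0 \<longrightarrow> es ! k < 0)"
proof -
  note Q = quad_form_diagonalized[OF M P D len]
  note col = quad_form_diagonalized_col[OF M P D len]
  obtain z i0 where z: "i0 < n" "z i0 \<noteq> 0"
    and null: "\<And>x. quad_form n M x = 0 \<longleftrightarrow> (\<exists>c. \<forall>i<n. x i = c * z i)"
    using nsd unfolding neg_semidef_corank_one_def by blast
  have es_nonpos: "es ! k \<le> 0" if "k < n" for k
  proof -
    have "quad_form n M (\<lambda>i. P $$ (i,k)) \<le> 0" using nsd unfolding neg_semidef_corank_one_def by blast
    then show ?thesis using col[OF that] by simp
  qed
  define y where "y k = (\<Sum>i<n. P $$ (i,k) * z i)" for k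
  have "\<exists>k0<n. y k0 \<noteq> 0"
  proof (rule ccontr)
    assume "\<not> ?thesis"
    then show False using orthonormal_mat_expansion[OF P z(1), of z] z(2) by (simp add: y_def)
  qed
  then obtain k0 where k0: "k0 < n" "y k0 \<noteq> 0" by blast
  have "quad_form n M z = 0" using null[of z] by auto
  then have "\<forall>k\<in>{..<n}. es ! k * (y k)\<^sup>2 = 0"
    unfolding Q y_def[symmetric]
    by (subst (asm) sum_nonpos_eq_0_iff) (auto simp: es_nonpos mult_nonpos_nonneg)
  then have e0: "es ! k0 = 0" using k0 by auto
  have "es ! k < 0" if k: "k < n" "k \<noteq> k0" for k
  proof (rule ccontr)
    assume "\<not> es ! k < 0"
    then have "es ! k = 0" using es_nonpos[OF k(1)] by simp
    then obtain a b where "\<forall>i<n. P $$ (i,k) = a * z i" "\<forall>i<n. P $$ (i,k0) = b * z i"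
      using null[of "\<lambda>i. P $$ (i,k)"] null[of "\<lambda>i. P $$ (i,k0)"] col[OF k(1)] col[OF k0(1)] e0
      by auto
    then show False using orthonormal_mat_cols_not_parallel[OF P k(1) k0(1) k(2)] by blast
  qed
  then show ?thesis using k0(1) e0 by blast
qed

theorem one_zero_rest_neg_iff_neg_semidef_corank_one:
  assumes M: "M \<in> carrier_mat n n" and sym: "transpose_mat M = M"
  shows "one_zero_rest_neg n M \<longleftrightarrow> neg_semidef_corank_one n M"
proof
  assume "one_zero_rest_neg n M"
  then obtain ls where neg: "\<forall>a\<in>set ls. a < 0"
    and cp: "char_poly M = [:0, 1:] * (\<Prod>a\<leftarrow>ls. [:- a, 1:])"
    unfolding one_zero_rest_neg_def by blast
  have cp': "char_poly M = (\<Prod>e\<leftarrow>0 # ls. [:-e,1:])" unfolding cp by simp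
  have len: "length (0 # ls) = n"
    using degree_monic_char_poly[OF M] unfolding cp' degree_linear_factors by simp
  obtain P where "orthonormal_mat n P" "transpose_mat P * M * P = diag_of_list (0 # ls)"
    using real_symmetric_diagonalization[OF M sym cp'] by blast
  moreover have "(0 # ls) ! k < 0" if "k < n" "k \<noteq> 0" for k
    using that len neg by (cases k) auto
  ultimately show "neg_semidef_corank_one n M"
    using len by (intro neg_semidef_corank_one_if_diag[OF M _ _ len, of _ 0]) auto
next
  assume nsd: "neg_semidef_corank_one n M"
  obtain es where cp: "char_poly M = (\<Prod>e\<leftarrow>es. [:-e,1:])"
    using char_poly_real_symmetric_splits[OF M sym] by blast
  have len: "length es = n"
    using degree_monic_char_poly[OF M] unfolding cp degree_linear_factors by simp
  obtain P where "orthonormal_mat n P" "transpose_mat P * M * P = diag_of_list es"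
    using real_symmetric_diagonalization[OF M sym cp] by blast
  then obtain k0 where k0: "k0 < n" "es ! k0 = 0" and neg: "\<And>k. k < n \<Longrightarrow> k \<noteq> k0 \<Longrightarrow> es ! k < 0"
    using diag_if_neg_semidef_corank_one[OF M _ _ len nsd] by blast
  define ls where "ls = take k0 es @ drop (Suc k0) es"
  have "take k0 es @ es ! k0 # drop (Suc k0) es = es"
    using k0(1) len by (intro id_take_nth_drop[symmetric]) simp
  then have "char_poly M = (\<Prod>e\<leftarrow>take k0 es @ es ! k0 # drop (Suc k0) es. [:-e,1:])"
    unfolding cp by simp
  also have "\<dots> = [:- (es ! k0), 1:] * (\<Prod>e\<leftarrow>ls. [:-e,1:])"
    unfolding ls_def by (simp only: map_append prod_list.append list.map prod_list.Cons mult_ac)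
  finally have "char_poly M = [:0, 1:] * (\<Prod>a\<leftarrow>ls. [:- a, 1:])"
    using k0(2) by simp
  moreover have "\<forall>a\<in>set ls. a < 0"
    using neg k0(1) len unfolding ls_def by (auto simp: in_set_conv_nth)
  moreover have "length ls = n - 1" using len k0(1) unfolding ls_def by simp
  ultimately show "one_zero_rest_neg n M" unfolding one_zero_rest_neg_def by blast
qed

lemma neg_semidef_corank_one_const_kernel:
  assumes const: "quad_form n M (\<lambda>_. 1) = 0"
  shows "neg_semidef_corank_one n M \<longleftrightarrow>
     0 < n \<and> (\<forall>x. quad_form n M x \<le> 0) \<and> (\<forall>x. quad_form n M x = 0 \<longleftrightarrow> (\<exists>c. \<forall>i<n. x i = c))"
proof
  assume "neg_semidef_corank_one n M"
  then obtain z i0 where nsd: "\<forall>x. quad_form n M x \<le> 0" and i0: "i0 < n" "z i0 \<noteq> 0"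
    and null: "\<And>x. quad_form n M x = 0 \<longleftrightarrow> (\<exists>c. \<forall>i<n. x i = c * z i)"
    unfolding neg_semidef_corank_one_def by blast
  \<comment> \<open>the constant vector spans the null space, so \<open>z\<close> is constant\<close>
  obtain c1 where c1: "\<forall>i<n. 1 = c1 * z i" using null[of "\<lambda>_. 1"] const by blast
  then have "c1 \<noteq> 0" using i0 by force
  then have "\<forall>i<n. z i = 1 / c1" using c1 by (simp add: eq_divide_eq mult.commute)
  then have "quad_form n M x = 0 \<longleftrightarrow> (\<exists>c. \<forall>i<n. x i = c)" for x
    unfolding null by (metis divide_self_if mult.right_neutral times_divide_eq_right \<open>c1 \<noteq> 0\<close>)
  then show "0 < n \<and> (\<forall>x. quad_form n M x \<le> 0) \<and> (\<forall>x. quad_form n M x = 0 \<longleftrightarrow> (\<exists>c. \<forall>i<n. x i = c))"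
    using nsd i0 by auto
next
  assume "0 < n \<and> (\<forall>x. quad_form n M x \<le> 0) \<and> (\<forall>x. quad_form n M x = 0 \<longleftrightarrow> (\<exists>c. \<forall>i<n. x i = c))"
  then show "neg_semidef_corank_one n M"
    unfolding neg_semidef_corank_one_def by (intro conjI exI[of _ "\<lambda>_. 1"]) auto
qed

section \<open>Weighted graph Laplacians\<close>

definition incidence :: "nat \<Rightarrow> nat \<Rightarrow> nat \<Rightarrow> real" where
  "incidence a i j = (if j = a then 1 else 0) - (if i = a then 1 else 0)"

text \<open>This is the form in which the Riemannian Hessian arises (see \<open>rhess_mat_fobj\<close>); for
  symmetric \<open>V\<close> it is the weighted graph Laplacian \<open>diag (\<Sum>\<^sub>j V i j) - V\<close>.\<close>

definition laplacian_mat :: "nat \<Rightarrow> (nat \<Rightarrow> nat \<Rightarrow> real) \<Rightarrow> real mat" where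
  "laplacian_mat k V = mat k k (\<lambda>(a,b). 1/2 * (\<Sum>i<k. \<Sum>j<k. V i j * incidence a i j * incidence b i j))"

lemma laplacian_mat_carrier: "laplacian_mat k V \<in> carrier_mat k k"
  unfolding laplacian_mat_def by auto

lemma laplacian_mat_symmetric: "transpose_mat (laplacian_mat k V) = laplacian_mat k V"
  unfolding laplacian_mat_def by (rule eq_matI) (auto simp: mult_ac)

lemma sum_incidence:
  assumes "i < k" "j < k"
  shows "(\<Sum>a<k. incidence a i j * x a) = x j - x i"
  using assms unfolding incidence_def
  by (simp add: left_diff_distrib sum_subtractf if_distrib[of "\<lambda>t. t * _"] cong: if_cong)

lemma sum_incidence_weighted:
  assumes "a < k"
  shows "(\<Sum>i<k. \<Sum>j<k. V i j * incidence a i j) = (\<Sum>i<k. V i a) - (\<Sum>j<k. V a j)"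
proof -
  have "(\<Sum>i<k. \<Sum>j<k. V i j * incidence a i j) =
      (\<Sum>i<k. (\<Sum>j<k. if j = a then V i j else 0) - (if i = a then (\<Sum>j<k. V i j) else 0))"
    unfolding incidence_def
    by (intro sum.cong refl) (auto simp: right_diff_distrib sum_subtractf if_distrib[of "\<lambda>t. _ * t"] cong: if_cong)
  also have "\<dots> = (\<Sum>i<k. V i a) - (\<Sum>j<k. V a j)"
    using assms by (simp add: sum_subtractf)
  finally show ?thesis .
qed

lemma sum_swap_pairs:
  "(\<Sum>a\<in>A. \<Sum>b\<in>B. \<Sum>i\<in>C. \<Sum>j\<in>D. f a b i j) = (\<Sum>i\<in>C. \<Sum>j\<in>D. \<Sum>a\<in>A. \<Sum>b\<in>B. f a b i j)"
proof -
  have "(\<Sum>a\<in>A. \<Sum>b\<in>B. \<Sum>i\<in>C. \<Sum>j\<in>D. f a b i j) = (\<Sum>a\<in>A. \<Sum>i\<in>C. \<Sum>j\<in>D. \<Sum>b\<in>B. f a b i j)"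
    by (intro sum.cong refl) (subst sum.swap, intro sum.cong refl, rule sum.swap)
  also have "\<dots> = (\<Sum>i\<in>C. \<Sum>j\<in>D. \<Sum>a\<in>A. \<Sum>b\<in>B. f a b i j)"
    by (subst sum.swap, intro sum.cong refl, rule sum.swap)
  finally show ?thesis .
qed

lemma quad_form_laplacian:
  "quad_form k (laplacian_mat k V) x = 1/2 * (\<Sum>i<k. \<Sum>j<k. V i j * (x j - x i)\<^sup>2)"
proof -
  have "quad_form k (laplacian_mat k V) x =
      (\<Sum>a<k. \<Sum>b<k. \<Sum>i<k. \<Sum>j<k. 1/2 * (V i j * (incidence a i j * x a) * (incidence b i j * x b)))"
    unfolding quad_form_def laplacian_mat_def by (simp add: sum_distrib_left sum_distrib_right mult_ac)
  also have "\<dots> = (\<Sum>i<k. \<Sum>j<k. \<Sum>a<k. \<Sum>b<k. 1/2 * (V i j * (incidence a i j * x a) * (incidence b i j * x b)))"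
    by (rule sum_swap_pairs)
  also have "\<dots> = (\<Sum>i<k. \<Sum>j<k. 1/2 * V i j * ((\<Sum>a<k. incidence a i j * x a) * (\<Sum>b<k. incidence b i j * x b)))"
    by (simp add: sum_distrib_left sum_distrib_right sum_product mult_ac)
  also have "\<dots> = (\<Sum>i<k. \<Sum>j<k. 1/2 * V i j * (x j - x i)\<^sup>2)"
    by (intro sum.cong refl) (simp add: sum_incidence power2_eq_square)
  finally show ?thesis by (simp add: sum_distrib_left mult_ac)
qed

lemma quad_form_laplacian_symmetric:
  assumes V_sym: "\<And>i j. V i j = V j i"
  shows "quad_form k (laplacian_mat k V) x =
     (\<Sum>i<k. (\<Sum>j<k. V i j) * (x i)\<^sup>2) - (\<Sum>i<k. \<Sum>j<k. V i j * x i * x j)"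
proof -
  have "(\<Sum>i<k. \<Sum>j<k. V i j * (x j - x i)\<^sup>2) =
      (\<Sum>i<k. \<Sum>j<k. V i j * (x j)\<^sup>2) + (\<Sum>i<k. \<Sum>j<k. V i j * (x i)\<^sup>2) - 2 * (\<Sum>i<k. \<Sum>j<k. V i j * x i * x j)"
    by (simp add: power2_eq_square algebra_simps sum.distrib sum_subtractf sum_distrib_left)
  also have "(\<Sum>i<k. \<Sum>j<k. V i j * (x j)\<^sup>2) = (\<Sum>i<k. \<Sum>j<k. V i j * (x i)\<^sup>2)"
    by (subst sum.swap) (simp add: V_sym)
  finally have "(\<Sum>i<k. \<Sum>j<k. V i j * (x j - x i)\<^sup>2) =
      2 * (\<Sum>i<k. \<Sum>j<k. V i j * (x i)\<^sup>2) - 2 * (\<Sum>i<k. \<Sum>j<k. V i j * x i * x j)" by simp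
  moreover have "(\<Sum>i<k. (\<Sum>j<k. V i j) * (x i)\<^sup>2) = (\<Sum>i<k. \<Sum>j<k. V i j * (x i)\<^sup>2)"
    by (simp add: sum_distrib_right)
  ultimately show ?thesis unfolding quad_form_laplacian by linarith
qed

lemma quad_form_laplacian_const: "quad_form k (laplacian_mat k V) (\<lambda>_. c) = 0"
  unfolding quad_form_laplacian by simp

lemma quad_form_laplacian_unit:
  assumes V_sym: "\<And>i j. V i j = V j i" and a: "a < k"
  shows "quad_form k (laplacian_mat k V) (\<lambda>b. if b = a then 1 else 0) = (\<Sum>j<k. V a j) - V a a"
  unfolding quad_form_laplacian_symmetric[OF V_sym] using a
  by (simp add: power2_eq_square if_distrib[of "\<lambda>t. _ * t"] if_distrib[of "\<lambda>t. t * _"] cong: if_cong)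

lemma laplacian_row_sum_neg:
  assumes V_sym: "\<And>i j. V i j = V j i" and a: "a < k" and Vaa: "V a a < 0"
    and nonpos: "\<And>x. quad_form k (laplacian_mat k V) x \<le> 0"
  shows "(\<Sum>j<k. V a j) < 0"
  using nonpos[of "\<lambda>b. if b = a then 1 else 0"] Vaa
  unfolding quad_form_laplacian_unit[OF V_sym a] by simp

section \<open>Gradient and Hessian on the torus\<close>

definition cross2 :: "real \<times> real \<Rightarrow> real \<times> real \<Rightarrow> real" where
  "cross2 x y = fst x * snd y - snd x * fst y"

definition inner_rot :: "real \<Rightarrow> real \<Rightarrow> real \<Rightarrow> real" where
  "inner_rot p r u = p * cos u - r * sin u"

lemma ip2_rot: "ip2 (rot a x) (rot b y) = inner_rot (ip2 x y) (cross2 x y) (b - a)"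
  unfolding ip2_def rot_def inner_rot_def cross2_def by (simp add: cos_diff sin_diff algebra_simps)

definition phi_rot' :: "(real \<Rightarrow> real) \<Rightarrow> real \<Rightarrow> real \<Rightarrow> real \<Rightarrow> real" where
  "phi_rot' dphi p r u = dphi (inner_rot p r u) * (- p * sin u - r * cos u)"

definition phi_rot'' :: "(real \<Rightarrow> real) \<Rightarrow> (real \<Rightarrow> real) \<Rightarrow> real \<Rightarrow> real \<Rightarrow> real \<Rightarrow> real" where
  "phi_rot'' dphi ddphi p r u =
     ddphi (inner_rot p r u) * (- p * sin u - r * cos u)\<^sup>2 + dphi (inner_rot p r u) * (- p * cos u + r * sin u)"

lemma ip2_cross2_unit:
  assumes "ip2 x x = 1" "ip2 y y = 1"
  shows "(ip2 x y)\<^sup>2 + (cross2 x y)\<^sup>2 = 1"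
proof -
  have "(ip2 x y)\<^sup>2 + (cross2 x y)\<^sup>2 = ip2 x x * ip2 y y"
    unfolding ip2_def cross2_def by (simp add: power2_eq_square algebra_simps)
  then show ?thesis using assms by simp
qed

lemma inner_rot_bounded:
  assumes "p\<^sup>2 + r\<^sup>2 = 1"
  shows "inner_rot p r u \<in> {-1..1}"
proof -
  have id: "(p * c - r * s)\<^sup>2 + (p * s + r * c)\<^sup>2 = (p\<^sup>2 + r\<^sup>2) * (s\<^sup>2 + c\<^sup>2)" for s c :: real
    by (simp add: power2_eq_square algebra_simps)
  have "(inner_rot p r u)\<^sup>2 + (p * sin u + r * cos u)\<^sup>2 = 1"
    unfolding inner_rot_def id using assms by simp
  then have "(inner_rot p r u)\<^sup>2 \<le> 1" by (smt (verit) zero_le_power2)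
  then show ?thesis using abs_le_square_iff[of "inner_rot p r u" 1] by (auto simp: abs_le_iff)
qed

lemma DERIV_compose_within:
  assumes g: "\<forall>y\<in>S. (g has_real_derivative g' y) (at y within S)"
    and f: "\<forall>u. f u \<in> S" and fd: "(f has_real_derivative f') (at x)"
  shows "((\<lambda>u. g (f u)) has_real_derivative g' (f x) * f') (at x)"
proof -
  have "((\<lambda>u. g (f u)) has_derivative (\<lambda>y. g' (f x) * (f' * y))) (at x within UNIV)"
    by (rule has_derivative_in_compose2[of S g "\<lambda>y. (*) (g' y)" f UNIV x "(*) f'"])
       (use g f fd in \<open>auto simp: has_field_derivative_def\<close>)
  then show ?thesis by (simp add: has_field_derivative_def mult.assoc[symmetric] mult.commute[of _ f'])
qed

lemma DERIV_phi_rot: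
  assumes C2: "C2_on_interval phi dphi ddphi" and pr: "p\<^sup>2 + r\<^sup>2 = 1"
  shows "((\<lambda>s. phi (inner_rot p r (a * s + b))) has_real_derivative phi_rot' dphi p r (a * x + b) * a) (at x)"
    and "((\<lambda>s. phi_rot' dphi p r (a * s + b)) has_real_derivative phi_rot'' dphi ddphi p r (a * x + b) * a) (at x)"
proof -
  have d1: "\<forall>y\<in>{-1..1}. (phi has_real_derivative dphi y) (at y within {-1..1})"
   and d2: "\<forall>y\<in>{-1..1}. (dphi has_real_derivative ddphi y) (at y within {-1..1})"
    using C2 unfolding C2_on_interval_def by auto
  have range: "\<forall>u. inner_rot p r u \<in> {-1..1}" using inner_rot_bounded[OF pr] by blast
  have inner: "(inner_rot p r has_real_derivative (- p * sin u - r * cos u)) (at u)" for u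
    unfolding inner_rot_def by (auto intro!: derivative_eq_intros)
  have phi': "((\<lambda>u. phi (inner_rot p r u)) has_real_derivative phi_rot' dphi p r u) (at u)" for u
    unfolding phi_rot'_def by (rule DERIV_compose_within[OF d1 range inner])
  have "((\<lambda>u. dphi (inner_rot p r u)) has_real_derivative ddphi (inner_rot p r u) * (- p * sin u - r * cos u)) (at u)" for u
    by (rule DERIV_compose_within[OF d2 range inner])
  moreover have "((\<lambda>u. - p * sin u - r * cos u) has_real_derivative (- p * cos u + r * sin u)) (at u)" for u
    by (auto intro!: derivative_eq_intros)
  ultimately have phi'': "(phi_rot' dphi p r has_real_derivative phi_rot'' dphi ddphi p r u) (at u)" for u
    unfolding phi_rot'_def[abs_def] phi_rot''_def using DERIV_mult
    by (fastforce simp: power2_eq_square algebra_simps)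
  have lin: "((\<lambda>s. a * s + b) has_real_derivative a) (at x)"
    by (auto intro!: derivative_eq_intros)
  show "((\<lambda>s. phi (inner_rot p r (a * s + b))) has_real_derivative phi_rot' dphi p r (a * x + b) * a) (at x)"
    using DERIV_chain2[OF phi' lin] .
  show "((\<lambda>s. phi_rot' dphi p r (a * s + b)) has_real_derivative phi_rot'' dphi ddphi p r (a * x + b) * a) (at x)"
    using DERIV_chain2[OF phi'' lin] .
qed

lemma deriv_sum_phi_rot:
  assumes C2: "C2_on_interval phi dphi ddphi"
    and pr: "\<forall>i<k. \<forall>j<k. (p i j)\<^sup>2 + (r i j)\<^sup>2 = 1"
  shows "deriv (\<lambda>s. 1/2 * (\<Sum>i<k. \<Sum>j<k. c i j * phi (inner_rot (p i j) (r i j) (\<alpha> i j * s + \<beta> i j)))) 0 =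
           1/2 * (\<Sum>i<k. \<Sum>j<k. c i j * phi_rot' dphi (p i j) (r i j) (\<beta> i j) * \<alpha> i j)"
    and "deriv (\<lambda>s. 1/2 * (\<Sum>i<k. \<Sum>j<k. c i j * phi_rot' dphi (p i j) (r i j) (\<alpha> i j * s + \<beta> i j))) 0 =
           1/2 * (\<Sum>i<k. \<Sum>j<k. c i j * phi_rot'' dphi ddphi (p i j) (r i j) (\<beta> i j) * \<alpha> i j)"
proof -
  have "((\<lambda>s. 1/2 * (\<Sum>i<k. \<Sum>j<k. c i j * phi (inner_rot (p i j) (r i j) (\<alpha> i j * s + \<beta> i j))))
      has_real_derivative 1/2 * (\<Sum>i<k. \<Sum>j<k. c i j * (phi_rot' dphi (p i j) (r i j) (\<alpha> i j * 0 + \<beta> i j) * \<alpha> i j))) (at 0)"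
    by (intro DERIV_cmult DERIV_sum DERIV_phi_rot(1)[OF C2]) (use pr in auto)
  then show "deriv (\<lambda>s. 1/2 * (\<Sum>i<k. \<Sum>j<k. c i j * phi (inner_rot (p i j) (r i j) (\<alpha> i j * s + \<beta> i j)))) 0 =
      1/2 * (\<Sum>i<k. \<Sum>j<k. c i j * phi_rot' dphi (p i j) (r i j) (\<beta> i j) * \<alpha> i j)"
    by (simp add: DERIV_imp_deriv mult.assoc)
  have "((\<lambda>s. 1/2 * (\<Sum>i<k. \<Sum>j<k. c i j * phi_rot' dphi (p i j) (r i j) (\<alpha> i j * s + \<beta> i j)))
      has_real_derivative 1/2 * (\<Sum>i<k. \<Sum>j<k. c i j * (phi_rot'' dphi ddphi (p i j) (r i j) (\<alpha> i j * 0 + \<beta> i j) * \<alpha> i j))) (at 0)"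
    by (intro DERIV_cmult DERIV_sum DERIV_phi_rot(2)[OF C2]) (use pr in auto)
  then show "deriv (\<lambda>s. 1/2 * (\<Sum>i<k. \<Sum>j<k. c i j * phi_rot' dphi (p i j) (r i j) (\<alpha> i j * s + \<beta> i j))) 0 =
      1/2 * (\<Sum>i<k. \<Sum>j<k. c i j * phi_rot'' dphi ddphi (p i j) (r i j) (\<beta> i j) * \<alpha> i j)"
    by (simp add: DERIV_imp_deriv mult.assoc)
qed

lemma fobj_expX:
  "fobj phi k W (expX Y t) =
     1/2 * (\<Sum>i<k. \<Sum>j<k. W i j * phi (inner_rot (ip2 (Y i) (Y j)) (cross2 (Y i) (Y j)) (t j - t i)))"
  unfolding fobj_def expX_def ip2_rot ..

lemma rgrad_fobj:
  assumes C2: "C2_on_interval phi dphi ddphi" and Y: "on_torus k Y" and a: "a < k"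
    and W_sym: "\<And>i j. W i j = W j i"
  shows "rgrad (fobj phi k W) Y a = (\<Sum>j<k. W a j * dphi (ip2 (Y a) (Y j)) * cross2 (Y a) (Y j))"
proof -
  let ?p = "\<lambda>i j. ip2 (Y i) (Y j)" and ?r = "\<lambda>i j. cross2 (Y i) (Y j)"
  have pr: "\<forall>i<k. \<forall>j<k. (?p i j)\<^sup>2 + (?r i j)\<^sup>2 = 1"
    using ip2_cross2_unit Y unfolding on_torus_def by auto
  have line: "(\<lambda>s. fobj phi k W (expX Y (\<lambda>l. if l = a then s else 0))) =
     (\<lambda>s. 1/2 * (\<Sum>i<k. \<Sum>j<k. W i j * phi (inner_rot (?p i j) (?r i j) (incidence a i j * s + 0))))"
    unfolding fobj_expX incidence_def by (auto simp: fun_eq_iff left_diff_distrib intro!: sum.cong)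
  have "rgrad (fobj phi k W) Y a = 1/2 * (\<Sum>i<k. \<Sum>j<k. (- W i j * dphi (?p i j) * ?r i j) * incidence a i j)"
    unfolding rgrad_def line deriv_sum_phi_rot(1)[OF C2 pr] by (simp add: phi_rot'_def inner_rot_def mult_ac)
  also have "\<dots> = 1/2 * ((\<Sum>i<k. - W i a * dphi (?p i a) * ?r i a) - (\<Sum>j<k. - W a j * dphi (?p a j) * ?r a j))"
    by (simp only: sum_incidence_weighted[OF a])
  also have "(\<Sum>i<k. - W i a * dphi (?p i a) * ?r i a) = (\<Sum>j<k. W a j * dphi (?p a j) * ?r a j)"
    by (intro sum.cong refl) (simp add: W_sym[of _ a] ip2_def cross2_def algebra_simps)
  finally show ?thesis by (simp add: sum_negf)
qed

definition hess_weight :: "(real \<Rightarrow> real) \<Rightarrow> (real \<Rightarrow> real) \<Rightarrow> real \<times> real \<Rightarrow> real \<times> real \<Rightarrow> real" where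
  "hess_weight dphi ddphi x y = ddphi (ip2 x y) * (cross2 x y)\<^sup>2 - dphi (ip2 x y) * ip2 x y"

lemma hess_weight_sym: "hess_weight dphi ddphi x y = hess_weight dphi ddphi y x"
  unfolding hess_weight_def ip2_def cross2_def by (simp add: algebra_simps power2_eq_square)

lemma hess_weight_self: "ip2 x x = 1 \<Longrightarrow> hess_weight dphi ddphi x x = - dphi 1"
  unfolding hess_weight_def cross2_def by simp

lemma rhess_mat_fobj:
  assumes C2: "C2_on_interval phi dphi ddphi" and Y: "on_torus k Y"
  shows "rhess_mat k (fobj phi k W) Y = laplacian_mat k (\<lambda>i j. W i j * hess_weight dphi ddphi (Y i) (Y j))"
proof -
  let ?p = "\<lambda>i j. ip2 (Y i) (Y j)" and ?r = "\<lambda>i j. cross2 (Y i) (Y j)"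
  have pr: "\<forall>i<k. \<forall>j<k. (?p i j)\<^sup>2 + (?r i j)\<^sup>2 = 1"
    using ip2_cross2_unit Y unfolding on_torus_def by auto
  have "rhess (fobj phi k W) Y a b =
    1/2 * (\<Sum>i<k. \<Sum>j<k. W i j * hess_weight dphi ddphi (Y i) (Y j) * incidence a i j * incidence b i j)" for a b
  proof -
    have plane: "(\<lambda>r. fobj phi k W (expX Y (\<lambda>l. (if l = a then s else 0) + (if l = b then r else 0)))) =
        (\<lambda>r. 1/2 * (\<Sum>i<k. \<Sum>j<k. W i j * phi (inner_rot (?p i j) (?r i j) (incidence b i j * r + incidence a i j * s))))"
      for s unfolding fobj_expX incidence_def by (auto simp: fun_eq_iff algebra_simps intro!: sum.cong)
    have "(\<lambda>s. deriv (\<lambda>r. fobj phi k W (expX Y (\<lambda>l. (if l = a then s else 0) + (if l = b then r else 0)))) 0) =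
        (\<lambda>s. 1/2 * (\<Sum>i<k. \<Sum>j<k. W i j * phi_rot' dphi (?p i j) (?r i j) (incidence a i j * s) * incidence b i j))"
      unfolding plane deriv_sum_phi_rot(1)[OF C2 pr] ..
    also have "\<dots> = (\<lambda>s. 1/2 * (\<Sum>i<k. \<Sum>j<k. (W i j * incidence b i j) * phi_rot' dphi (?p i j) (?r i j) (incidence a i j * s + 0)))"
      by (simp add: mult_ac)
    finally have first_deriv: "(\<lambda>s. deriv (\<lambda>r. fobj phi k W (expX Y (\<lambda>l. (if l = a then s else 0) + (if l = b then r else 0)))) 0) =
        (\<lambda>s. 1/2 * (\<Sum>i<k. \<Sum>j<k. (W i j * incidence b i j) * phi_rot' dphi (?p i j) (?r i j) (incidence a i j * s + 0)))" .
    show ?thesis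
      unfolding rhess_def first_deriv deriv_sum_phi_rot(2)[OF C2 pr]
      by (simp add: phi_rot''_def inner_rot_def hess_weight_def power2_eq_square mult_ac)
  qed
  then show ?thesis unfolding rhess_mat_def laplacian_mat_def by (intro eq_matI) auto
qed

section \<open>Replicated configurations\<close>

definition block_offset :: "(nat \<Rightarrow> nat) \<Rightarrow> nat \<Rightarrow> nat" where
  "block_offset q a = (\<Sum>l<a. q l)"

definition replicates :: "nat \<Rightarrow> (nat \<Rightarrow> nat) \<Rightarrow> (nat \<Rightarrow> 'a) \<Rightarrow> (nat \<Rightarrow> 'a) \<Rightarrow> bool" where
  "replicates m q X Xt \<longleftrightarrow> (\<forall>a<m. \<forall>r<q a. Xt (block_offset q a + r) = X a)"

definition block_mean :: "(nat \<Rightarrow> nat) \<Rightarrow> (nat \<Rightarrow> real) \<Rightarrow> nat \<Rightarrow> real" where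
  "block_mean q v a = (\<Sum>r<q a. v (block_offset q a + r)) / real (q a)"

definition block_dev :: "(nat \<Rightarrow> nat) \<Rightarrow> (nat \<Rightarrow> real) \<Rightarrow> nat \<Rightarrow> real" where
  "block_dev q v a = (\<Sum>r<q a. (v (block_offset q a + r) - block_mean q v a)\<^sup>2)"

lemma sum_blocks:
  "(\<Sum>i<(\<Sum>l<m. q l). g i) = (\<Sum>a<m. \<Sum>r<q a. g (block_offset q a + r))"
proof (induct m)
  case (Suc m)
  have "(\<Sum>i<a + b. g i) = (\<Sum>i<a. g i) + (\<Sum>r<b. g (a + r))" for a b
    by (induct b) (auto simp: add.assoc)
  then show ?case using Suc by (simp add: block_offset_def)
qed simp

lemma block_index_exists:
  assumes "i < (\<Sum>l<m. q l)"
  shows "\<exists>a r. a < m \<and> r < q a \<and> i = block_offset q a + r"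
  using assms
proof (induct m)
  case (Suc m)
  show ?case
  proof (cases "i < (\<Sum>l<m. q l)")
    case True then show ?thesis using Suc(1) by (meson less_Suc_eq)
  next
    case False
    then show ?thesis using Suc(2)
      by (intro exI[of _ m] exI[of _ "i - (\<Sum>l<m. q l)"]) (auto simp: block_offset_def)
  qed
qed simp

lemma sum_replicated:
  assumes "replicates m q X Xt"
  shows "(\<Sum>j<(\<Sum>l<m. q l). g (Xt j)) = (\<Sum>b<m. real (q b) * g (X b))"
  using assms unfolding sum_blocks replicates_def by (intro sum.cong refl) simp

lemma on_torus_replicated:
  assumes "on_torus m X" "replicates m q X Xt"
  shows "on_torus (\<Sum>l<m. q l) Xt"
  unfolding on_torus_def
proof (intro allI impI)
  fix i assume "i < (\<Sum>l<m. q l)"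
  then obtain a r where "a < m" "r < q a" "i = block_offset q a + r" using block_index_exists by blast
  then show "ip2 (Xt i) (Xt i) = 1" using assms unfolding on_torus_def replicates_def by simp
qed

lemma sum_squares_mean_dev:
  fixes v :: "nat \<Rightarrow> real"
  assumes "0 < Q"
  shows "(\<Sum>r<Q. (v r)\<^sup>2) = (\<Sum>r<Q. v r)\<^sup>2 / real Q + (\<Sum>r<Q. (v r - (\<Sum>r<Q. v r) / real Q)\<^sup>2)"
proof -
  define S where "S = (\<Sum>r<Q. v r)"
  define c where "c = S / real Q"
  have "(\<Sum>r<Q. (v r - c)\<^sup>2) = (\<Sum>r<Q. (v r)\<^sup>2) + (real Q * c\<^sup>2 - 2 * c * S)"
    unfolding power2_diff sum.distrib sum_subtractf S_def by (simp add: sum_distrib_left algebra_simps)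
  also have "real Q * c\<^sup>2 - 2 * c * S = - (S\<^sup>2 / real Q)"
    using assms unfolding c_def by (simp add: power2_eq_square field_simps)
  finally show ?thesis unfolding S_def[symmetric] c_def by simp
qed

lemma block_dev_eq_0_iff:
  "block_dev q v a = 0 \<longleftrightarrow> (\<forall>r<q a. v (block_offset q a + r) = block_mean q v a)"
  unfolding block_dev_def by (subst sum_nonneg_eq_0_iff) auto

lemma quad_form_laplacian_replicated:
  fixes H :: "'a \<Rightarrow> 'a \<Rightarrow> real"
  assumes q: "\<forall>a<m. 0 < q a" and rep: "replicates m q X Xt" and H_sym: "\<And>x y. H x y = H y x"
  shows "quad_form (\<Sum>l<m. q l) (laplacian_mat (\<Sum>l<m. q l) (\<lambda>i j. H (Xt i) (Xt j))) v =
     quad_form m (laplacian_mat m (\<lambda>a b. real (q a) * real (q b) * H (X a) (X b))) (block_mean q v)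
     + (\<Sum>a<m. (\<Sum>b<m. real (q b) * H (X a) (X b)) * block_dev q v a)"
proof -
  define S where "S a = (\<Sum>r<q a. v (block_offset q a + r))" for a
  define T where "T a = (\<Sum>r<q a. (v (block_offset q a + r))\<^sup>2)" for a
  define mu where "mu a = (\<Sum>b<m. real (q b) * H (X a) (X b))" for a
  have Xt: "Xt (block_offset q a + r) = X a" if "a < m" "r < q a" for a r
    using rep that unfolding replicates_def by blast
  have "quad_form (\<Sum>l<m. q l) (laplacian_mat (\<Sum>l<m. q l) (\<lambda>i j. H (Xt i) (Xt j))) v =
      (\<Sum>a<m. mu a * T a) - (\<Sum>a<m. \<Sum>b<m. H (X a) (X b) * S a * S b)"
  proof -
    have "(\<Sum>i<(\<Sum>l<m. q l). \<Sum>j<(\<Sum>l<m. q l). H (Xt i) (Xt j) * v i * v j) =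
        (\<Sum>a<m. \<Sum>r<q a. \<Sum>b<m. \<Sum>s<q b. H (X a) (X b) * v (block_offset q a + r) * v (block_offset q b + s))"
      unfolding sum_blocks by (intro sum.cong refl) (simp add: Xt)
    also have "\<dots> = (\<Sum>a<m. \<Sum>b<m. H (X a) (X b) * S a * S b)"
      unfolding S_def by (rule sum.cong[OF refl], subst sum.swap) (simp add: sum_distrib_left sum_distrib_right mult_ac)
    finally show ?thesis
      unfolding quad_form_laplacian_symmetric[where V = "\<lambda>i j. H (Xt i) (Xt j)", OF H_sym]
      unfolding sum_blocks T_def mu_def by (simp add: Xt sum_distrib_left)
  qed
  moreover have "quad_form m (laplacian_mat m (\<lambda>a b. real (q a) * real (q b) * H (X a) (X b))) (block_mean q v) =
      (\<Sum>a<m. mu a * ((S a)\<^sup>2 / real (q a))) - (\<Sum>a<m. \<Sum>b<m. H (X a) (X b) * S a * S b)"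
  proof -
    have weights_sym: "real (q a) * real (q b) * H (X a) (X b) = real (q b) * real (q a) * H (X b) (X a)" for a b
      using H_sym by (simp add: mult.commute)
    have t1: "(\<Sum>b<m. real (q a) * real (q b) * H (X a) (X b)) * (block_mean q v a)\<^sup>2 = mu a * ((S a)\<^sup>2 / real (q a))"
      if "a < m" for a
    proof -
      have "(\<Sum>b<m. real (q a) * real (q b) * H (X a) (X b)) = real (q a) * mu a"
        unfolding mu_def by (simp add: sum_distrib_left mult.assoc)
      then show ?thesis using q that by (simp add: block_mean_def S_def power2_eq_square field_simps)
    qed
    have t2: "real (q a) * real (q b) * H (X a) (X b) * block_mean q v a * block_mean q v b = H (X a) (X b) * S a * S b"
      if "a < m" "b < m" for a b
      using q that by (simp add: block_mean_def S_def field_simps)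
    show ?thesis
      unfolding quad_form_laplacian_symmetric[where V = "\<lambda>a b. real (q a) * real (q b) * H (X a) (X b)", OF weights_sym]
      by (intro arg_cong2[where f = "(-)"] sum.cong refl) (simp_all add: t1 t2)
  qed
  moreover have "block_dev q v a = T a - (S a)\<^sup>2 / real (q a)" if "a < m" for a
    using sum_squares_mean_dev[of "q a" "\<lambda>r. v (block_offset q a + r)"] q that
    unfolding block_dev_def block_mean_def S_def T_def by simp
  ultimately show ?thesis by (simp add: mu_def[symmetric] right_diff_distrib sum_subtractf)
qed

lemma laplacian_replicated_neg_semidef_corank_one:
  fixes H :: "'a \<Rightarrow> 'a \<Rightarrow> real"
  assumes q: "\<forall>a<m. 0 < q a" and rep: "replicates m q X Xt" and H_sym: "\<And>x y. H x y = H y x"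
    and self_neg: "\<And>a. a < m \<Longrightarrow> H (X a) (X a) < 0"
    and nsd: "neg_semidef_corank_one m (laplacian_mat m (\<lambda>a b. real (q a) * real (q b) * H (X a) (X b)))"
  shows "neg_semidef_corank_one (\<Sum>l<m. q l) (laplacian_mat (\<Sum>l<m. q l) (\<lambda>i j. H (Xt i) (Xt j)))"
proof -
  let ?n = "\<Sum>l<m. q l" and ?Lm = "laplacian_mat m (\<lambda>a b. real (q a) * real (q b) * H (X a) (X b))"
  define mu where "mu a = (\<Sum>b<m. real (q b) * H (X a) (X b))" for a
  have decomp: "quad_form ?n (laplacian_mat ?n (\<lambda>i j. H (Xt i) (Xt j))) v =
      quad_form m ?Lm (block_mean q v) + (\<Sum>a<m. mu a * block_dev q v a)" for v
    unfolding mu_def by (rule quad_form_laplacian_replicated[OF q rep H_sym])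
  have m: "0 < m" and Lm_nonpos: "\<And>x. quad_form m ?Lm x \<le> 0"
    and Lm_null: "\<And>x. quad_form m ?Lm x = 0 \<longleftrightarrow> (\<exists>c. \<forall>a<m. x a = c)"
    using nsd unfolding neg_semidef_corank_one_const_kernel[OF quad_form_laplacian_const] by auto
  have mu_neg: "mu a < 0" if a: "a < m" for a
  proof -
    have "(\<Sum>b<m. real (q a) * real (q b) * H (X a) (X b)) < 0"
      using a q self_neg[OF a] Lm_nonpos
      by (intro laplacian_row_sum_neg) (auto simp: H_sym mult_pos_pos mult_pos_neg)
    then have "real (q a) * mu a < 0" unfolding mu_def by (simp add: sum_distrib_left mult.assoc)
    then show ?thesis using q a by (simp add: mult_less_0_iff)
  qed
  have dev_term_nonpos: "mu a * block_dev q v a \<le> 0" if "a < m" for a v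
    using mu_neg[OF that] by (simp add: block_dev_def mult_nonpos_nonneg sum_nonneg)
  have nonpos: "quad_form ?n (laplacian_mat ?n (\<lambda>i j. H (Xt i) (Xt j))) v \<le> 0" for v
    unfolding decomp by (intro add_nonpos_nonpos Lm_nonpos sum_nonpos dev_term_nonpos) simp
  have "(\<exists>c. \<forall>i<?n. v i = c)" if "quad_form ?n (laplacian_mat ?n (\<lambda>i j. H (Xt i) (Xt j))) v = 0" for v
  proof -
    have "quad_form m ?Lm (block_mean q v) = 0" "(\<Sum>a<m. mu a * block_dev q v a) = 0"
      using that Lm_nonpos[of "block_mean q v"] sum_nonpos[of "{..<m}" "\<lambda>a. mu a * block_dev q v a"]
        dev_term_nonpos unfolding decomp by auto
    then obtain c where c: "\<forall>a<m. block_mean q v a = c" and dev0: "\<forall>a\<in>{..<m}. mu a * block_dev q v a = 0"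
      using Lm_null sum_nonpos_eq_0_iff[of "{..<m}" "\<lambda>a. mu a * block_dev q v a"] dev_term_nonpos by auto
    have "\<forall>a<m. block_dev q v a = 0"
    proof (intro allI impI)
      fix a assume a: "a < m"
      then have "mu a * block_dev q v a = 0" using dev0 by blast
      then show "block_dev q v a = 0" using mu_neg[OF a] by simp
    qed
    then have "\<forall>a<m. \<forall>r<q a. v (block_offset q a + r) = c" using c by (simp add: block_dev_eq_0_iff)
    then show ?thesis using block_index_exists by metis
  qed
  moreover have "quad_form ?n (laplacian_mat ?n (\<lambda>i j. H (Xt i) (Xt j))) v = 0" if "\<forall>i<?n. v i = c" for v c
    using quad_form_cong[of ?n v "\<lambda>_. c"] that by (simp add: quad_form_laplacian_const)
  moreover have "0 < ?n" using m q by (metis lessThan_iff member_le_sum finite_lessThan le_zero_eq not_gr_zero zero_le)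
  ultimately show ?thesis
    unfolding neg_semidef_corank_one_const_kernel[OF quad_form_laplacian_const] using nonpos by blast
qed

lemma riem_critical_replicated:
  assumes C2: "C2_on_interval phi dphi ddphi" and q: "\<forall>a<m. 0 < q a"
    and rep: "replicates m q X Xt" and X: "on_torus m X"
    and crit: "riem_critical m (fobj phi m (\<lambda>i j. real (q i) * real (q j))) X"
  shows "riem_critical (\<Sum>l<m. q l) (fobj phi (\<Sum>l<m. q l) (\<lambda>i j. 1)) Xt"
  unfolding riem_critical_def
proof (intro allI impI)
  fix i assume i: "i < (\<Sum>l<m. q l)"
  then obtain a r where ar: "a < m" "r < q a" "i = block_offset q a + r"
    using block_index_exists by blast
  then have Xt_i: "Xt i = X a" using rep unfolding replicates_def by blast
  let ?g = "\<lambda>b. real (q b) * (dphi (ip2 (X a) (X b)) * cross2 (X a) (X b))"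
  have "real (q a) * (\<Sum>b<m. ?g b) = rgrad (fobj phi m (\<lambda>i j. real (q i) * real (q j))) X a"
    by (simp add: rgrad_fobj[OF C2 X ar(1)] sum_distrib_left mult_ac)
  also have "\<dots> = 0" using crit ar(1) unfolding riem_critical_def by blast
  finally have "(\<Sum>b<m. ?g b) = 0" using q ar(1) by (metis mult_eq_0_iff of_nat_0_eq_iff not_less0 gr_zeroI)
  moreover have "rgrad (fobj phi (\<Sum>l<m. q l) (\<lambda>i j. 1)) Xt i = (\<Sum>b<m. ?g b)"
    using sum_replicated[OF rep, of "\<lambda>y. dphi (ip2 (X a) y) * cross2 (X a) y"]
    by (simp add: rgrad_fobj[OF C2 on_torus_replicated[OF X rep] i] Xt_i)
  ultimately show "rgrad (fobj phi (\<Sum>l<m. q l) (\<lambda>i j. 1)) Xt i = 0" by simp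
qed

theorem mainTheorem14:
  fixes phi dphi ddphi :: "real \<Rightarrow> real"
    and m n :: nat and q :: "nat \<Rightarrow> nat"
    and X Xt :: "nat \<Rightarrow> real \<times> real"
  assumes C2: "C2_on_interval phi dphi ddphi"
    and dphi1: "dphi 1 > 0"
    and qpos: "\<forall>i<m. q i > 0"
    and n_def: "n = (\<Sum>i<m. q i)"
    and X_torus: "on_torus m X"
    and Xt_def: "\<forall>i<m. \<forall>r<q i. Xt ((\<Sum>l<i. q l) + r) = X i"
    and crit: "riem_critical m (fobj phi m (\<lambda>i j. real (q i) * real (q j))) X"
    and hess: "one_zero_rest_neg m (rhess_mat m (fobj phi m (\<lambda>i j. real (q i) * real (q j))) X)"
  shows "riem_critical n (fobj phi n (\<lambda>i j. 1)) Xt \<and>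
         one_zero_rest_neg n (rhess_mat n (fobj phi n (\<lambda>i j. 1)) Xt)"
proof
  have rep: "replicates m q X Xt" using Xt_def unfolding replicates_def block_offset_def .
  show "riem_critical n (fobj phi n (\<lambda>i j. 1)) Xt"
    unfolding n_def by (rule riem_critical_replicated[OF C2 qpos rep X_torus crit])
  let ?H = "hess_weight dphi ddphi"
  have Hm: "rhess_mat m (fobj phi m (\<lambda>i j. real (q i) * real (q j))) X =
      laplacian_mat m (\<lambda>a b. real (q a) * real (q b) * ?H (X a) (X b))"
    by (rule rhess_mat_fobj[OF C2 X_torus])
  have Hn: "rhess_mat n (fobj phi n (\<lambda>i j. 1)) Xt = laplacian_mat n (\<lambda>i j. ?H (Xt i) (Xt j))"
    using rhess_mat_fobj[OF C2 on_torus_replicated[OF X_torus rep]] n_def by simp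
  have "neg_semidef_corank_one m (laplacian_mat m (\<lambda>a b. real (q a) * real (q b) * ?H (X a) (X b)))"
    using hess unfolding Hm one_zero_rest_neg_iff_neg_semidef_corank_one[OF laplacian_mat_carrier laplacian_mat_symmetric] .
  then have "neg_semidef_corank_one n (laplacian_mat n (\<lambda>i j. ?H (Xt i) (Xt j)))"
    unfolding n_def using X_torus dphi1
    by (intro laplacian_replicated_neg_semidef_corank_one[OF qpos rep hess_weight_sym])
       (auto simp: on_torus_def hess_weight_self)
  then show "one_zero_rest_neg n (rhess_mat n (fobj phi n (\<lambda>i j. 1)) Xt)"
    unfolding Hn one_zero_rest_neg_iff_neg_semidef_corank_one[OF laplacian_mat_carrier laplacian_mat_symmetric] .
qed

end
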